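(* Let $\beta_1,\beta_2>0$, $\tau\in(0,1)$, and suppose $(\bar x,\bar y)\in X\times\mathbb{R}^m$ satisfies $f(\bar x;\beta_2)\le d(\bar y;\beta_1)$, and that $$\beta_1\beta_2\ge\frac{2\tau^2}{1-\tau}\max_{i=1,2}\frac{\|A_i\|^2}{\sigma_i}.$$ (a) (Primal step.) Define $\hat x:=(1-\tau)\bar x+\tau x^*(\bar y;\beta_1)$, $\bar y^+:=(1-\tau)\bar y+\tau y^*(\hat x;\beta_2)$, $\bar x^+:=P(\hat x;\beta_2)$ and $\beta_1^+:=(1-\tau)\beta_1$. Then $(\bar x^+,\bar y^+)\in X\times\mathbb{R}^m$ and $f(\bar x^+;\beta_2)\le d(\bar y^+;\beta_1^+)$. (b) (Dual step.) Define $\hat y:=(1-\tau)\bar y+\tau y^*(\bar x;\beta_2)$, $\bar x^+:=(1-\tau)\bar x+\tau x^*(\hat y;\beta_1)$, $\bar y^+:=G(\hat y;\beta_1)$ and $\beta_2^+:=(1-\tau)\beta_2$. Then $(\bar x^+,\bar y^+)\in X\times\mathbb{R}^m$ and $f(\bar x^+;\beta_2^+)\le d(\bar y^+;\beta_1)$.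
   Context: All spaces carry the Euclidean inner product and norm $\|\cdot\|$; for a matrix, $\|\cdot\|$ is the induced operator norm. For $i=1,2$: $X_i\subset\mathbb{R}^{n_i}$ is nonempty, closed, convex and bounded; $\phi_i:\mathbb{R}^{n_i}\to\mathbb{R}$ is convex; $A_i\in\mathbb{R}^{m\times n_i}$; $b\in\mathbb{R}^m$. Write $x=(x_1,x_2)$, $X=X_1\times X_2$, $A=[A_1,A_2]$ (so $Ax=A_1x_1+A_2x_2$), $\phi(x)=\phi_1(x_1)+\phi_2(x_2)$. For $i=1,2$, $p_i$ is a prox-function of $X_i$: continuous and strongly convex on $X_i$ with convexity parameter $\sigma_i>0$, with prox-center $x_i^c=\arg\min_{x_i\in X_i}p_i(x_i)$ normalized so $p_i(x_i^c)=0$. For $\beta_1>0$, $d(y;\beta_1):=\min_{x\in X}\{\phi(x)+y^T(Ax-b)+\beta_1(p_1(x_1)+p_2(x_2))\}$, whose (unique) minimizer is denoted $x^*(y;\beta_1)$. With $L^d(\beta_1):=\frac{1}{\beta_1}\big(\frac{\|A_1\|^2}{\sigma_1}+\frac{\|A_2\|^2}{\sigma_2}\big)$, the gradient mapping is $G(\hat y;\beta_1):=\hat y+\frac{1}{L^d(\beta_1)}(Ax^*(\hat y;\beta_1)-b)$. For $\beta_2>0$, $y^*(x;\beta_2):=\frac{1}{\beta_2}(Ax-b)$ and $f(x;\beta_2):=\phi(x)+\frac{1}{2\beta_2}\|Ax-b\|^2$. With $L_i^\psi(\beta_2):=\frac{2\|A_i\|^2}{\beta_2}$, the proximal mapping is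 $P_i(\hat x;\beta_2):=\arg\min_{x_i\in X_i}\{\phi_i(x_i)+y^*(\hat x;\beta_2)^TA_i(x_i-\hat x_i)+\frac{L_i^\psi(\beta_2)}{2}\|x_i-\hat x_i\|^2\}$ for $\hat x=(\hat x_1,\hat x_2)$, and $P(\hat x;\beta_2):=(P_1(\hat x;\beta_2),P_2(\hat x;\beta_2))$. *)

theory Defs
  imports "HOL-Analysis.Analysis"
begin

definition strongly_convex_on :: "'a::real_normed_vector set \<Rightarrow> real \<Rightarrow> ('a \<Rightarrow> real) \<Rightarrow> bool" where
  "strongly_convex_on S \<sigma> p \<longleftrightarrow>
     (\<forall>x\<in>S. \<forall>y\<in>S. \<forall>t\<in>{0..1}.
        p ((1 - t) *\<^sub>R x + t *\<^sub>R y) \<le> (1 - t) * p x + t * p y - \<sigma> / 2 * t * (1 - t) * (norm (x - y))\<^sup>2)"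

definition prox_function :: "'a::real_normed_vector set \<Rightarrow> real \<Rightarrow> ('a \<Rightarrow> real) \<Rightarrow> bool" where
  "prox_function X \<sigma> p \<longleftrightarrow> continuous_on X p \<and> \<sigma> > 0 \<and> strongly_convex_on X \<sigma> p \<and>
     (\<exists>c\<in>X. p c = 0 \<and> (\<forall>x\<in>X. p c \<le> p x))"

definition opnorm :: "real^'n^'m \<Rightarrow> real" where
  "opnorm M = onorm (\<lambda>v. M *v v)"

definition dobj where
  "dobj \<phi>1 \<phi>2 A1 A2 b p1 p2 y \<beta>1 x =
     \<phi>1 (fst x) + \<phi>2 (snd x) + y \<bullet> (A1 *v fst x + A2 *v snd x - b) + \<beta>1 * (p1 (fst x) + p2 (snd x))"

definition dfun where
  "dfun \<phi>1 \<phi>2 A1 A2 b X1 X2 p1 p2 y \<beta>1 =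
     Inf (dobj \<phi>1 \<phi>2 A1 A2 b p1 p2 y \<beta>1 ` (X1 \<times> X2))"

definition xstar where
  "xstar \<phi>1 \<phi>2 A1 A2 b X1 X2 p1 p2 y \<beta>1 =
     (SOME x. x \<in> X1 \<times> X2 \<and> (\<forall>z\<in>X1 \<times> X2.
        dobj \<phi>1 \<phi>2 A1 A2 b p1 p2 y \<beta>1 x \<le> dobj \<phi>1 \<phi>2 A1 A2 b p1 p2 y \<beta>1 z))"

definition Ld :: "real^'n1^'m \<Rightarrow> real^'n2^'m \<Rightarrow> real \<Rightarrow> real \<Rightarrow> real \<Rightarrow> real" where
  "Ld A1 A2 \<sigma>1 \<sigma>2 \<beta>1 = (1 / \<beta>1) * ((opnorm A1)\<^sup>2 / \<sigma>1 + (opnorm A2)\<^sup>2 / \<sigma>2)"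

definition Gmap where
  "Gmap \<phi>1 \<phi>2 A1 A2 b X1 X2 p1 p2 \<sigma>1 \<sigma>2 yh \<beta>1 =
     (let x = xstar \<phi>1 \<phi>2 A1 A2 b X1 X2 p1 p2 yh \<beta>1 in
      yh + (1 / Ld A1 A2 \<sigma>1 \<sigma>2 \<beta>1) *\<^sub>R (A1 *v fst x + A2 *v snd x - b))"

definition ystar where
  "ystar A1 A2 b x \<beta>2 = (1 / \<beta>2) *\<^sub>R (A1 *v fst x + A2 *v snd x - b)"

definition ffun where
  "ffun \<phi>1 \<phi>2 A1 A2 b x \<beta>2 =
     \<phi>1 (fst x) + \<phi>2 (snd x) + 1 / (2 * \<beta>2) * (norm (A1 *v fst x + A2 *v snd x - b))\<^sup>2"

definition P1 where
  "P1 \<phi>1 A1 A2 b X1 xh \<beta>2 =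
     (SOME z. z \<in> X1 \<and> (\<forall>w\<in>X1.
        \<phi>1 z + ystar A1 A2 b xh \<beta>2 \<bullet> (A1 *v (z - fst xh)) + (2 * (opnorm A1)\<^sup>2 / \<beta>2) / 2 * (norm (z - fst xh))\<^sup>2
        \<le> \<phi>1 w + ystar A1 A2 b xh \<beta>2 \<bullet> (A1 *v (w - fst xh)) + (2 * (opnorm A1)\<^sup>2 / \<beta>2) / 2 * (norm (w - fst xh))\<^sup>2))"

definition P2 where
  "P2 \<phi>2 A1 A2 b X2 xh \<beta>2 =
     (SOME z. z \<in> X2 \<and> (\<forall>w\<in>X2.
        \<phi>2 z + ystar A1 A2 b xh \<beta>2 \<bullet> (A2 *v (z - snd xh)) + (2 * (opnorm A2)\<^sup>2 / \<beta>2) / 2 * (norm (z - snd xh))\<^sup>2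
        \<le> \<phi>2 w + ystar A1 A2 b xh \<beta>2 \<bullet> (A2 *v (w - snd xh)) + (2 * (opnorm A2)\<^sup>2 / \<beta>2) / 2 * (norm (w - snd xh))\<^sup>2))"

definition Pmap where
  "Pmap \<phi>1 \<phi>2 A1 A2 b X1 X2 xh \<beta>2 = (P1 \<phi>1 A1 A2 b X1 xh \<beta>2, P2 \<phi>2 A1 A2 b X2 xh \<beta>2)"

end

theory Submission
  imports Defs
begin

lemma opnorm_bound: "norm (A *v v) \<le> opnorm A * norm v"
  unfolding opnorm_def by (rule onorm) simp

lemma opnorm_sq_bound: "(norm (A *v v))\<^sup>2 \<le> (opnorm A)\<^sup>2 * (norm v)\<^sup>2"
proof -
  have "(norm (A *v v))\<^sup>2 \<le> (opnorm A * norm v)\<^sup>2"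
    by (rule power_mono[OF opnorm_bound]) simp
  then show ?thesis by (simp add: power_mult_distrib)
qed

lemma opnorm_pos: "A \<noteq> 0 \<Longrightarrow> 0 < opnorm A"
  unfolding opnorm_def by (subst onorm_pos_lt) (auto simp: matrix_eq)

lemma norm_sq_tangent_le:
  fixes a c :: "'a::real_inner"
  shows "(norm c)\<^sup>2 + 2 * (c \<bullet> (a - c)) \<le> (norm a)\<^sup>2"
proof -
  have "0 \<le> (norm (a - c))\<^sup>2" by simp
  then show ?thesis
    by (simp add: power2_norm_eq_inner inner_diff_left inner_diff_right inner_commute algebra_simps)
qed

(* Expanding |c + u + v|^2 and bounding the cross term u.v by |u|^2 + |v|^2. *)
lemma norm_sq_sum3_le:
  fixes c u v :: "'a::real_inner"
  shows "(norm (c + u + v))\<^sup>2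
    \<le> (norm c)\<^sup>2 + 2 * (c \<bullet> u) + 2 * (c \<bullet> v) + 2 * (norm u)\<^sup>2 + 2 * (norm v)\<^sup>2"
proof -
  have "0 \<le> (norm (u - v))\<^sup>2" by simp
  then show ?thesis
    by (simp add: power2_norm_eq_inner inner_diff_left inner_add_left
        inner_add_right inner_commute algebra_simps)
qed

lemma penalty_convex_comb:
  fixes R S :: "'a::real_inner"
  assumes "\<tau> < 1" "\<beta> > 0"
  shows "1 / (2 * ((1 - \<tau>) * \<beta>)) * (norm ((1 - \<tau>) *\<^sub>R R + \<tau> *\<^sub>R S))\<^sup>2
    = (1 - \<tau>) * ((norm R)\<^sup>2 / (2 * \<beta>)) + \<tau> * ((R \<bullet> S) / \<beta>) + \<tau>\<^sup>2 * (norm S)\<^sup>2 / (2 * (1 - \<tau>) * \<beta>)"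
proof -
  have expand: "(norm ((1 - \<tau>) *\<^sub>R R + \<tau> *\<^sub>R S))\<^sup>2
      = (1 - \<tau>)\<^sup>2 * (norm R)\<^sup>2 + 2 * (1 - \<tau>) * \<tau> * (R \<bullet> S) + \<tau>\<^sup>2 * (norm S)\<^sup>2"
    unfolding power2_norm_eq_inner
    by (simp add: inner_add_left inner_add_right inner_commute algebra_simps power2_eq_square)
  show ?thesis unfolding expand using assms by (simp add: field_simps power2_eq_square)
qed

lemma young_product:
  fixes k s a d :: real
  assumes "k > 0"
  shows "s * a * d \<le> k / 2 * d\<^sup>2 + s\<^sup>2 * a\<^sup>2 / (2 * k)"
proof -
  have "k / 2 * d\<^sup>2 + s\<^sup>2 * a\<^sup>2 / (2 * k) - s * a * d = (k * d - s * a)\<^sup>2 / (2 * k)"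
    using assms by (simp add: field_simps power2_eq_square)
  moreover have "0 \<le> (k * d - s * a)\<^sup>2 / (2 * k)" using assms by simp
  ultimately show ?thesis by linarith
qed

(* A continuous function on a nonempty compact set attains its infimum, so the Hilbert
   choice of a minimizer (as used in the definitions of xstar, P1, P2) is one. *)
lemma some_minimizer:
  fixes g :: "'a::topological_space \<Rightarrow> real"
  assumes "compact S" "S \<noteq> {}" "continuous_on S g"
  defines "m \<equiv> SOME x. x \<in> S \<and> (\<forall>w\<in>S. g x \<le> g w)"
  shows "m \<in> S \<and> (\<forall>w\<in>S. g m \<le> g w)"
  unfolding m_def using continuous_attains_inf[OF assms(1-3)] by (rule someI_ex[OF bexE]) blast

(* If (1 - t) Q <= D for all weights t in (0,1], then Q <= D (let t tend to 0). *)
lemma le_of_shrinking_weights: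
  fixes D Q :: real
  assumes "0 \<le> Q" and weighted: "\<And>t. 0 < t \<Longrightarrow> t \<le> 1 \<Longrightarrow> (1 - t) * Q \<le> D"
  shows "Q \<le> D"
proof (rule ccontr)
  assume "\<not> Q \<le> D"
  then have QD: "D < Q" by simp
  have "0 \<le> D" using weighted[of 1] by simp
  define t where "t = (Q - D) / (2 * Q)"
  have "0 < t" "t \<le> 1" using QD \<open>0 \<le> D\<close> by (simp_all add: t_def field_simps)
  then have "(1 - t) * Q \<le> D" by (rule weighted)
  moreover have "(1 - t) * Q = (Q + D) / 2" using QD \<open>0 \<le> D\<close> by (simp add: t_def field_simps)
  ultimately show False using QD by simp
qed

lemma minimizer_quadratic_growth:
  fixes g :: "'a::real_vector \<Rightarrow> real"
  assumes "convex C" "x \<in> C" "z \<in> C" and min: "\<forall>w\<in>C. g x \<le> g w" and "0 \<le> Q"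
    and strong: "\<And>t. 0 < t \<Longrightarrow> t \<le> 1 \<Longrightarrow>
      g ((1 - t) *\<^sub>R x + t *\<^sub>R z) \<le> (1 - t) * g x + t * g z - t * (1 - t) * Q"
  shows "g x + Q \<le> g z"
proof -
  have "Q \<le> g z - g x"
  proof (rule le_of_shrinking_weights[OF \<open>0 \<le> Q\<close>])
    fix t :: real assume t: "0 < t" "t \<le> 1"
    have "(1 - t) *\<^sub>R x + t *\<^sub>R z \<in> C"
      using assms(1-3) t unfolding convex_alt by simp
    with min have "g x \<le> g ((1 - t) *\<^sub>R x + t *\<^sub>R z)" by blast
    also have "\<dots> \<le> (1 - t) * g x + t * g z - t * (1 - t) * Q" by (rule strong[OF t])
    finally have "t * ((1 - t) * Q) \<le> t * (g z - g x)" by (simp add: algebra_simps)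
    then show "(1 - t) * Q \<le> g z - g x" using t by simp
  qed
  then show ?thesis by simp
qed

lemma step_size_condition:
  fixes a1 a2 \<sigma>1 \<sigma>2 \<beta>1 \<beta>2 \<tau> :: real
  assumes "\<sigma>1 > 0" "\<sigma>2 > 0" "\<tau> < 1"
    and cond: "\<beta>1 * \<beta>2 \<ge> 2 * \<tau>\<^sup>2 / (1 - \<tau>) * max (a1 / \<sigma>1) (a2 / \<sigma>2)"
  shows "2 * \<tau>\<^sup>2 * a1 \<le> (1 - \<tau>) * \<beta>1 * \<beta>2 * \<sigma>1"
    and "2 * \<tau>\<^sup>2 * a2 \<le> (1 - \<tau>) * \<beta>1 * \<beta>2 * \<sigma>2"
    and "\<tau>\<^sup>2 * (a1 / \<sigma>1 + a2 / \<sigma>2) \<le> (1 - \<tau>) * \<beta>1 * \<beta>2"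
proof -
  define m where "m = max (a1 / \<sigma>1) (a2 / \<sigma>2)"
  have cm: "2 * \<tau>\<^sup>2 * m \<le> (1 - \<tau>) * \<beta>1 * \<beta>2"
    using cond \<open>\<tau> < 1\<close> unfolding m_def[symmetric] by (simp add: field_simps)
  have m1: "\<tau>\<^sup>2 * (a1 / \<sigma>1) \<le> \<tau>\<^sup>2 * m"
    and m2: "\<tau>\<^sup>2 * (a2 / \<sigma>2) \<le> \<tau>\<^sup>2 * m"
    unfolding m_def by (intro mult_left_mono; simp)+
  have "2 * \<tau>\<^sup>2 * (a1 / \<sigma>1) \<le> (1 - \<tau>) * \<beta>1 * \<beta>2"
    and "2 * \<tau>\<^sup>2 * (a2 / \<sigma>2) \<le> (1 - \<tau>) * \<beta>1 * \<beta>2"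
    using m1 m2 cm by linarith+
  then show "2 * \<tau>\<^sup>2 * a1 \<le> (1 - \<tau>) * \<beta>1 * \<beta>2 * \<sigma>1"
    and "2 * \<tau>\<^sup>2 * a2 \<le> (1 - \<tau>) * \<beta>1 * \<beta>2 * \<sigma>2"
    using \<open>\<sigma>1 > 0\<close> \<open>\<sigma>2 > 0\<close> by (simp_all add: field_simps)
  show "\<tau>\<^sup>2 * (a1 / \<sigma>1 + a2 / \<sigma>2) \<le> (1 - \<tau>) * \<beta>1 * \<beta>2"
  proof -
    have "\<tau>\<^sup>2 * (a1 / \<sigma>1 + a2 / \<sigma>2) = \<tau>\<^sup>2 * (a1 / \<sigma>1) + \<tau>\<^sup>2 * (a2 / \<sigma>2)"
      by (rule distrib_left)
    also have "\<dots> \<le> \<tau>\<^sup>2 * m + \<tau>\<^sup>2 * m" using m1 m2 by (rule add_mono)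
    also have "\<dots> \<le> (1 - \<tau>) * \<beta>1 * \<beta>2" using cm by linarith
    finally show ?thesis .
  qed
qed

(* Arithmetic core of the primal step: under the step-size condition the proximal terms
   at distance tau*d_i from the centre are paid for by (1-tau) times the growth term. *)
lemma primal_proximal_term_bound:
  fixes a1 a2 d1 d2 \<sigma>1 \<sigma>2 \<beta>1 \<beta>2 \<tau> :: real
  assumes "\<beta>2 > 0"
    and c1: "2 * \<tau>\<^sup>2 * a1\<^sup>2 \<le> (1 - \<tau>) * \<beta>1 * \<beta>2 * \<sigma>1"
    and c2: "2 * \<tau>\<^sup>2 * a2\<^sup>2 \<le> (1 - \<tau>) * \<beta>1 * \<beta>2 * \<sigma>2"
  shows "a1\<^sup>2 / \<beta>2 * (\<tau> * d1)\<^sup>2 + a2\<^sup>2 / \<beta>2 * (\<tau> * d2)\<^sup>2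
    \<le> (1 - \<tau>) * (\<beta>1 / 2 * (\<sigma>1 * d1\<^sup>2 + \<sigma>2 * d2\<^sup>2))"
proof -
  have "a1\<^sup>2 / \<beta>2 * \<tau>\<^sup>2 * d1\<^sup>2 \<le> (1 - \<tau>) * \<beta>1 / 2 * \<sigma>1 * d1\<^sup>2"
    using c1 \<open>\<beta>2 > 0\<close> by (intro mult_right_mono) (simp_all add: field_simps)
  moreover have "a2\<^sup>2 / \<beta>2 * \<tau>\<^sup>2 * d2\<^sup>2 \<le> (1 - \<tau>) * \<beta>1 / 2 * \<sigma>2 * d2\<^sup>2"
    using c2 \<open>\<beta>2 > 0\<close> by (intro mult_right_mono) (simp_all add: field_simps)
  ultimately show ?thesis by (simp add: field_simps)
qed

(* Arithmetic core of the dual step: with L = (a1^2/sigma1 + a2^2/sigma2)/beta, the growth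
   term absorbs the first-order loss n*a_i*d_i/L, leaving a gain of n^2/(2L). *)
lemma dual_ascent_arith:
  fixes a1 a2 d1 d2 n \<sigma>1 \<sigma>2 \<beta> L :: real
  assumes "\<beta> > 0" "\<sigma>1 > 0" "\<sigma>2 > 0" "L > 0"
    and L: "L = (a1\<^sup>2 / \<sigma>1 + a2\<^sup>2 / \<sigma>2) / \<beta>"
  shows "n\<^sup>2 / (2 * L) \<le> \<beta> / 2 * (\<sigma>1 * d1\<^sup>2 + \<sigma>2 * d2\<^sup>2) + (n\<^sup>2 - n * a1 * d1 - n * a2 * d2) / L"
proof -
  define s where "s = n / L"
  have y1: "s * a1 * d1 \<le> (\<beta> * \<sigma>1) / 2 * d1\<^sup>2 + s\<^sup>2 * a1\<^sup>2 / (2 * (\<beta> * \<sigma>1))"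
    and y2: "s * a2 * d2 \<le> (\<beta> * \<sigma>2) / 2 * d2\<^sup>2 + s\<^sup>2 * a2\<^sup>2 / (2 * (\<beta> * \<sigma>2))"
    using assms by (intro young_product; simp)+
  have "s\<^sup>2 * a1\<^sup>2 / (2 * (\<beta> * \<sigma>1)) + s\<^sup>2 * a2\<^sup>2 / (2 * (\<beta> * \<sigma>2)) = s\<^sup>2 * L / 2"
    unfolding L using assms by (simp add: field_simps)
  also have "\<dots> = n\<^sup>2 / (2 * L)" unfolding s_def using \<open>L > 0\<close> by (simp add: field_simps power2_eq_square)
  finally have sum: "s\<^sup>2 * a1\<^sup>2 / (2 * (\<beta> * \<sigma>1)) + s\<^sup>2 * a2\<^sup>2 / (2 * (\<beta> * \<sigma>2)) = n\<^sup>2 / (2 * L)" .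
  have "(n\<^sup>2 - n * a1 * d1 - n * a2 * d2) / L = n\<^sup>2 / (2 * L) + n\<^sup>2 / (2 * L) - s * a1 * d1 - s * a2 * d2"
    unfolding s_def using \<open>L > 0\<close> by (simp add: field_simps)
  then show ?thesis using y1 y2 sum by (simp add: algebra_simps)
qed

locale composite_problem =
  fixes X1 :: "(real^'n1) set" and X2 :: "(real^'n2) set"
    and \<phi>1 :: "real^'n1 \<Rightarrow> real" and \<phi>2 :: "real^'n2 \<Rightarrow> real"
    and A1 :: "real^'n1^'m" and A2 :: "real^'n2^'m" and b :: "real^'m"
    and p1 :: "real^'n1 \<Rightarrow> real" and p2 :: "real^'n2 \<Rightarrow> real"
    and \<sigma>1 \<sigma>2 :: real
  assumes X1: "X1 \<noteq> {}" "closed X1" "convex X1" "bounded X1"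
    and X2: "X2 \<noteq> {}" "closed X2" "convex X2" "bounded X2"
    and phi: "convex_on UNIV \<phi>1" "convex_on UNIV \<phi>2"
    and prox: "prox_function X1 \<sigma>1 p1" "prox_function X2 \<sigma>2 p2"
begin

abbreviation "res x \<equiv> A1 *v fst x + A2 *v snd x - b"
abbreviation "phi x \<equiv> \<phi>1 (fst x) + \<phi>2 (snd x)"
abbreviation "obj y \<beta> x \<equiv> dobj \<phi>1 \<phi>2 A1 A2 b p1 p2 y \<beta> x"
abbreviation "dd y \<beta> \<equiv> dfun \<phi>1 \<phi>2 A1 A2 b X1 X2 p1 p2 y \<beta>"
abbreviation "xs y \<beta> \<equiv> xstar \<phi>1 \<phi>2 A1 A2 b X1 X2 p1 p2 y \<beta>"
abbreviation "ys x \<beta> \<equiv> ystar A1 A2 b x \<beta>"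
abbreviation "ff x \<beta> \<equiv> ffun \<phi>1 \<phi>2 A1 A2 b x \<beta>"

lemma sigma_pos: "\<sigma>1 > 0" "\<sigma>2 > 0"
  using prox by (auto simp: prox_function_def)

(* Normalization p_i(x_i^c) = 0 at the prox-centre makes the prox-functions nonnegative. *)
lemma prox_nonneg: "x1 \<in> X1 \<Longrightarrow> 0 \<le> p1 x1" "x2 \<in> X2 \<Longrightarrow> 0 \<le> p2 x2"
  using prox unfolding prox_function_def by force+

lemma compact_X: "compact X1" "compact X2" "compact (X1 \<times> X2)"
proof -
  show "compact X1" "compact X2" using X1 X2 by (simp_all add: compact_eq_bounded_closed)
  then show "compact (X1 \<times> X2)" by (rule compact_Times)
qed

lemma convex_comb_in_X:
  "x \<in> X1 \<times> X2 \<Longrightarrow> z \<in> X1 \<times> X2 \<Longrightarrow> 0 \<le> t \<Longrightarrow> t \<le> 1 \<Longrightarrow> (1 - t) *\<^sub>R x + t *\<^sub>R z \<in> X1 \<times> X2"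
  using X1(3) X2(3) convex_Times unfolding convex_alt by blast

lemma continuous_phi: "continuous_on S1 \<phi>1" "continuous_on S2 \<phi>2"
  using convex_on_continuous[OF open_UNIV phi(1)] convex_on_continuous[OF open_UNIV phi(2)]
    continuous_on_subset by blast+

lemma res_convex_comb: "res ((1 - t) *\<^sub>R x + t *\<^sub>R z) = (1 - t) *\<^sub>R res x + t *\<^sub>R res z"
proof -
  have "b = (1 - t) *\<^sub>R b + t *\<^sub>R b" by (simp add: scaleR_left_distrib[symmetric])
  then show ?thesis by (simp add: algebra_simps)
qed

lemma res_diff: "res x - res z = A1 *v (fst x - fst z) + A2 *v (snd x - snd z)"
  by (simp add: matrix_vector_mult_diff_distrib algebra_simps)

lemma phi_convex:
  assumes "0 \<le> t" "t \<le> 1"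
  shows "phi ((1 - t) *\<^sub>R x + t *\<^sub>R z) \<le> (1 - t) * phi x + t * phi z"
proof -
  have "\<phi>1 ((1 - t) *\<^sub>R fst x + t *\<^sub>R fst z) \<le> (1 - t) * \<phi>1 (fst x) + t * \<phi>1 (fst z)"
    and "\<phi>2 ((1 - t) *\<^sub>R snd x + t *\<^sub>R snd z) \<le> (1 - t) * \<phi>2 (snd x) + t * \<phi>2 (snd z)"
    using convex_onD[OF phi(1)] convex_onD[OF phi(2)] assms by blast+
  then show ?thesis by (simp add: algebra_simps)
qed

lemma xstar_minimizes: "xs y \<beta> \<in> X1 \<times> X2 \<and> (\<forall>z\<in>X1 \<times> X2. obj y \<beta> (xs y \<beta>) \<le> obj y \<beta> z)"
proof -
  have "continuous_on (X1 \<times> X2) (\<lambda>x. p1 (fst x))" "continuous_on (X1 \<times> X2) (\<lambda>x. p2 (snd x))"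
    "continuous_on (X1 \<times> X2) (\<lambda>x. \<phi>1 (fst x))" "continuous_on (X1 \<times> X2) (\<lambda>x. \<phi>2 (snd x))"
    using prox continuous_phi
    by (auto simp: prox_function_def intro!: continuous_on_compose2[OF _ continuous_on_fst]
        continuous_on_compose2[OF _ continuous_on_snd])
  then have "continuous_on (X1 \<times> X2) (obj y \<beta>)"
    unfolding dobj_def
    by (intro continuous_intros bounded_linear.continuous_on[OF matrix_vector_mul_bounded_linear])
  then show ?thesis
    unfolding xstar_def using compact_X(3) X1(1) X2(1) by (intro some_minimizer) auto
qed

lemma dfun_eq_obj_xstar: "dd y \<beta> = obj y \<beta> (xs y \<beta>)"
  unfolding dfun_def using xstar_minimizes[of y \<beta>] by (intro cInf_eq_minimum) auto

lemma obj_strongly_convex: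
  assumes x: "x \<in> X1 \<times> X2" and z: "z \<in> X1 \<times> X2" and t: "0 \<le> t" "t \<le> 1" and "\<beta> \<ge> 0"
  shows "obj y \<beta> ((1 - t) *\<^sub>R x + t *\<^sub>R z) \<le> (1 - t) * obj y \<beta> x + t * obj y \<beta> z
     - t * (1 - t) * (\<beta> / 2 * (\<sigma>1 * (norm (fst x - fst z))\<^sup>2 + \<sigma>2 * (norm (snd x - snd z))\<^sup>2))"
proof -
  have "p1 ((1 - t) *\<^sub>R fst x + t *\<^sub>R fst z) \<le> (1 - t) * p1 (fst x) + t * p1 (fst z)
      - \<sigma>1 / 2 * t * (1 - t) * (norm (fst x - fst z))\<^sup>2"
    and "p2 ((1 - t) *\<^sub>R snd x + t *\<^sub>R snd z) \<le> (1 - t) * p2 (snd x) + t * p2 (snd z)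
      - \<sigma>2 / 2 * t * (1 - t) * (norm (snd x - snd z))\<^sup>2"
    using prox x z t unfolding prox_function_def strongly_convex_on_def by auto
  then have "\<beta> * (p1 ((1 - t) *\<^sub>R fst x + t *\<^sub>R fst z) + p2 ((1 - t) *\<^sub>R snd x + t *\<^sub>R snd z))
     \<le> \<beta> * ((1 - t) * p1 (fst x) + t * p1 (fst z) - \<sigma>1 / 2 * t * (1 - t) * (norm (fst x - fst z))\<^sup>2
       + ((1 - t) * p2 (snd x) + t * p2 (snd z) - \<sigma>2 / 2 * t * (1 - t) * (norm (snd x - snd z))\<^sup>2))"
    using \<open>\<beta> \<ge> 0\<close> by (intro mult_left_mono) auto
  moreover have "y \<bullet> res ((1 - t) *\<^sub>R x + t *\<^sub>R z) = (1 - t) * (y \<bullet> res x) + t * (y \<bullet> res z)"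
    by (simp only: res_convex_comb inner_add_right inner_scaleR_right)
  ultimately show ?thesis
    using phi_convex[OF t, of x z] unfolding dobj_def by (simp add: algebra_simps)
qed

lemma obj_growth:
  assumes "z \<in> X1 \<times> X2" and "\<beta> \<ge> 0"
  shows "dd y \<beta> + \<beta> / 2 * (\<sigma>1 * (norm (fst (xs y \<beta>) - fst z))\<^sup>2 + \<sigma>2 * (norm (snd (xs y \<beta>) - snd z))\<^sup>2)
    \<le> obj y \<beta> z"
  unfolding dfun_eq_obj_xstar
proof (rule minimizer_quadratic_growth[where C = "X1 \<times> X2"])
  show "convex (X1 \<times> X2)" using X1(3) X2(3) by (rule convex_Times)
  show "0 \<le> \<beta> / 2 * (\<sigma>1 * (norm (fst (xs y \<beta>) - fst z))\<^sup>2 + \<sigma>2 * (norm (snd (xs y \<beta>) - snd z))\<^sup>2)"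
    using \<open>\<beta> \<ge> 0\<close> sigma_pos by simp
  show "\<And>t. 0 < t \<Longrightarrow> t \<le> 1 \<Longrightarrow> obj y \<beta> ((1 - t) *\<^sub>R xs y \<beta> + t *\<^sub>R z) \<le> (1 - t) * obj y \<beta> (xs y \<beta>)
      + t * obj y \<beta> z - t * (1 - t) * (\<beta> / 2 * (\<sigma>1 * (norm (fst (xs y \<beta>) - fst z))\<^sup>2
      + \<sigma>2 * (norm (snd (xs y \<beta>) - snd z))\<^sup>2))"
    using xstar_minimizes assms by (intro obj_strongly_convex) auto
qed (use xstar_minimizes assms in auto)

lemma obj_shift: "obj y' \<beta> x = obj y \<beta> x + (y' - y) \<bullet> res x"
  unfolding dobj_def by (simp add: inner_diff_left)

lemma obj_multiplier_comb:
  "obj ((1 - \<tau>) *\<^sub>R y + \<tau> *\<^sub>R y') \<beta>' x = (1 - \<tau>) * obj y \<beta> x + \<tau> * (phi x + y' \<bullet> res x)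
     + (\<beta>' - (1 - \<tau>) * \<beta>) * (p1 (fst x) + p2 (snd x))"
  unfolding dobj_def by (simp add: inner_add_left algebra_simps)

(* Linearization at xh of the penalty |Ax - b|^2/(2 beta), whose gradient there is the
   multiplier y*(xh;beta). *)
definition lin_penalty :: "(real^'n1) \<times> (real^'n2) \<Rightarrow> real \<Rightarrow> (real^'n1) \<times> (real^'n2) \<Rightarrow> real" where
  "lin_penalty xh \<beta> x = (norm (res xh))\<^sup>2 / (2 * \<beta>) + ys xh \<beta> \<bullet> (res x - res xh)"

(* The separable quadratic upper model of f(.;beta) around xh; the proximal mapping P
   minimizes exactly this model over X. *)
definition prox_model :: "(real^'n1) \<times> (real^'n2) \<Rightarrow> real \<Rightarrow> (real^'n1) \<times> (real^'n2) \<Rightarrow> real" where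
  "prox_model xh \<beta> x = phi x + lin_penalty xh \<beta> x
     + (opnorm A1)\<^sup>2 / \<beta> * (norm (fst x - fst xh))\<^sup>2 + (opnorm A2)\<^sup>2 / \<beta> * (norm (snd x - snd xh))\<^sup>2"

lemma ystar_inner: "ys xh \<beta> \<bullet> v = (res xh \<bullet> v) / \<beta>"
  by (simp add: ystar_def)

lemma lin_penalty_affine:
  "lin_penalty xh \<beta> ((1 - t) *\<^sub>R x + t *\<^sub>R z) = (1 - t) * lin_penalty xh \<beta> x + t * lin_penalty xh \<beta> z"
proof -
  have "res ((1 - t) *\<^sub>R x + t *\<^sub>R z) - res xh = (1 - t) *\<^sub>R (res x - res xh) + t *\<^sub>R (res z - res xh)"
    unfolding res_convex_comb by (simp add: algebra_simps)
  then have "ys xh \<beta> \<bullet> (res ((1 - t) *\<^sub>R x + t *\<^sub>R z) - res xh)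
      = (1 - t) * (ys xh \<beta> \<bullet> (res x - res xh)) + t * (ys xh \<beta> \<bullet> (res z - res xh))"
    by (simp only: inner_add_right inner_scaleR_right)
  moreover have "(1 - t) * (c + p) + t * (c + q) = c + ((1 - t) * p + t * q)" for c p q :: real
    by (simp add: algebra_simps)
  ultimately show ?thesis unfolding lin_penalty_def by simp
qed

(* Convexity of the penalty: f lies above phi plus the linearized penalty. *)
lemma ffun_ge_lin_penalty:
  assumes "\<beta> > 0"
  shows "phi x + lin_penalty xh \<beta> x \<le> ff x \<beta>"
proof -
  have "(norm (res xh))\<^sup>2 + 2 * (res xh \<bullet> (res x - res xh)) \<le> (norm (res x))\<^sup>2"
    by (rule norm_sq_tangent_le)
  then have "((norm (res xh))\<^sup>2 + 2 * (res xh \<bullet> (res x - res xh))) / (2 * \<beta>) \<le> (norm (res x))\<^sup>2 / (2 * \<beta>)"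
    using assms by (intro divide_right_mono) auto
  then show ?thesis
    unfolding ffun_def lin_penalty_def ystar_inner using assms by (simp add: field_simps)
qed

lemma lin_penalty_le_multiplier:
  assumes "\<beta> > 0"
  shows "lin_penalty xh \<beta> x \<le> ys xh \<beta> \<bullet> res x"
proof -
  have "ys xh \<beta> \<bullet> res xh = (norm (res xh))\<^sup>2 / \<beta>"
    unfolding ystar_inner by (simp add: power2_norm_eq_inner)
  moreover have "0 \<le> (norm (res xh))\<^sup>2 / (2 * \<beta>)" using assms by simp
  ultimately show ?thesis unfolding lin_penalty_def inner_diff_right by (simp add: field_simps)
qed

(* Descent lemma: the proximal terms |A_i|^2/beta |x_i - xh_i|^2 dominate the curvature
   of the penalty, so the model lies above f. *)
lemma ffun_le_prox_model:
  assumes "\<beta> > 0"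
  shows "ff x \<beta> \<le> prox_model xh \<beta> x"
proof -
  define u where "u = A1 *v (fst x - fst xh)"
  define v where "v = A2 *v (snd x - snd xh)"
  have res_x: "res x = res xh + u + v"
    using res_diff[of x xh] unfolding u_def v_def by (simp add: algebra_simps)
  have "(norm (res x))\<^sup>2 \<le> (norm (res xh))\<^sup>2 + 2 * (res xh \<bullet> u) + 2 * (res xh \<bullet> v)
      + 2 * ((opnorm A1)\<^sup>2 * (norm (fst x - fst xh))\<^sup>2) + 2 * ((opnorm A2)\<^sup>2 * (norm (snd x - snd xh))\<^sup>2)"
    using norm_sq_sum3_le[of "res xh" u v] opnorm_sq_bound[of A1 "fst x - fst xh"]
      opnorm_sq_bound[of A2 "snd x - snd xh"] unfolding res_x u_def v_def by linarith
  then have "(norm (res x))\<^sup>2 / (2 * \<beta>) \<le> ((norm (res xh))\<^sup>2 + 2 * (res xh \<bullet> u) + 2 * (res xh \<bullet> v)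
      + 2 * ((opnorm A1)\<^sup>2 * (norm (fst x - fst xh))\<^sup>2) + 2 * ((opnorm A2)\<^sup>2 * (norm (snd x - snd xh))\<^sup>2))
      / (2 * \<beta>)"
    using assms by (intro divide_right_mono) auto
  also have "\<dots> = prox_model xh \<beta> x - phi x"
  proof -
    have "res x - res xh = u + v" using res_x by simp
    then show ?thesis
      unfolding prox_model_def lin_penalty_def ystar_inner using assms
      by (simp add: inner_add_right field_simps)
  qed
  finally show ?thesis unfolding ffun_def by simp
qed

(* The proximal mapping P(xh;beta) minimizes the model over X: the model splits into a
   constant plus one term per block, and P_i minimizes the i-th term over X_i. *)
lemma Pmap_minimizes_prox_model:
  fixes xh :: "(real^'n1) \<times> (real^'n2)" and \<beta> :: real
  defines "xp \<equiv> Pmap \<phi>1 \<phi>2 A1 A2 b X1 X2 xh \<beta>"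
  shows "xp \<in> X1 \<times> X2 \<and> (\<forall>u\<in>X1 \<times> X2. prox_model xh \<beta> xp \<le> prox_model xh \<beta> u)"
proof -
  define h1 where "h1 z = \<phi>1 z + ys xh \<beta> \<bullet> (A1 *v (z - fst xh))
      + (2 * (opnorm A1)\<^sup>2 / \<beta>) / 2 * (norm (z - fst xh))\<^sup>2" for z
  define h2 where "h2 z = \<phi>2 z + ys xh \<beta> \<bullet> (A2 *v (z - snd xh))
      + (2 * (opnorm A2)\<^sup>2 / \<beta>) / 2 * (norm (z - snd xh))\<^sup>2" for z
  have split: "prox_model xh \<beta> x = (norm (res xh))\<^sup>2 / (2 * \<beta>) + h1 (fst x) + h2 (snd x)" for x
    unfolding prox_model_def lin_penalty_def h1_def h2_def res_diff by (simp add: inner_add_right)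
  have cont: "continuous_on X1 h1" "continuous_on X2 h2"
    unfolding h1_def h2_def
    by (intro continuous_intros continuous_phi bounded_linear.continuous_on[OF matrix_vector_mul_bounded_linear])+
  have "fst xp = (SOME z. z \<in> X1 \<and> (\<forall>w\<in>X1. h1 z \<le> h1 w))"
    and "snd xp = (SOME z. z \<in> X2 \<and> (\<forall>w\<in>X2. h2 z \<le> h2 w))"
    unfolding xp_def Pmap_def P1_def P2_def h1_def h2_def by simp_all
  then have "fst xp \<in> X1 \<and> (\<forall>w\<in>X1. h1 (fst xp) \<le> h1 w)" "snd xp \<in> X2 \<and> (\<forall>w\<in>X2. h2 (snd xp) \<le> h2 w)"
    using some_minimizer[OF compact_X(1) X1(1) cont(1)] some_minimizer[OF compact_X(2) X2(1) cont(2)]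
    by simp_all
  then show ?thesis unfolding split by (auto simp: mem_Times_iff intro: add_mono)
qed

(* The new dual value after the primal step, bounded below by the growth of d(.;beta1)
   away from x*(yb) and by the linearization of f at an arbitrary point xh. *)
lemma dfun_lower_after_primal_step:
  fixes xb xh :: "(real^'n1) \<times> (real^'n2)" and yb :: "real^'m" and \<beta>1 \<beta>2 \<tau> :: real
  assumes \<beta>: "\<beta>1 > 0" "\<beta>2 > 0" and \<tau>: "0 \<le> \<tau>" "\<tau> \<le> 1" and gap: "ff xb \<beta>2 \<le> dd yb \<beta>1"
  defines "x' \<equiv> xs ((1 - \<tau>) *\<^sub>R yb + \<tau> *\<^sub>R ys xh \<beta>2) ((1 - \<tau>) * \<beta>1)"
  shows "(1 - \<tau>) * (phi xb + lin_penalty xh \<beta>2 xb + \<beta>1 / 2 * (\<sigma>1 * (norm (fst (xs yb \<beta>1) - fst x'))\<^sup>2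
      + \<sigma>2 * (norm (snd (xs yb \<beta>1) - snd x'))\<^sup>2)) + \<tau> * (phi x' + lin_penalty xh \<beta>2 x')
    \<le> dd ((1 - \<tau>) *\<^sub>R yb + \<tau> *\<^sub>R ys xh \<beta>2) ((1 - \<tau>) * \<beta>1)"
proof -
  have x': "x' \<in> X1 \<times> X2" using xstar_minimizes x'_def by blast
  have "phi xb + lin_penalty xh \<beta>2 xb + \<beta>1 / 2 * (\<sigma>1 * (norm (fst (xs yb \<beta>1) - fst x'))\<^sup>2
      + \<sigma>2 * (norm (snd (xs yb \<beta>1) - snd x'))\<^sup>2) \<le> obj yb \<beta>1 x'"
    using ffun_ge_lin_penalty[OF \<beta>(2), of xb xh] gap obj_growth[OF x', of \<beta>1 yb] \<beta>(1) by simp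
  then have "(1 - \<tau>) * (phi xb + lin_penalty xh \<beta>2 xb + \<beta>1 / 2 * (\<sigma>1 * (norm (fst (xs yb \<beta>1) - fst x'))\<^sup>2
      + \<sigma>2 * (norm (snd (xs yb \<beta>1) - snd x'))\<^sup>2)) \<le> (1 - \<tau>) * obj yb \<beta>1 x'"
    using \<tau> by (intro mult_left_mono) auto
  moreover have "\<tau> * (phi x' + lin_penalty xh \<beta>2 x') \<le> \<tau> * (phi x' + ys xh \<beta>2 \<bullet> res x')"
    using lin_penalty_le_multiplier[OF \<beta>(2)] \<tau> by (intro mult_left_mono) auto
  moreover have "dd ((1 - \<tau>) *\<^sub>R yb + \<tau> *\<^sub>R ys xh \<beta>2) ((1 - \<tau>) * \<beta>1)
      = (1 - \<tau>) * obj yb \<beta>1 x' + \<tau> * (phi x' + ys xh \<beta>2 \<bullet> res x')"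
    unfolding dfun_eq_obj_xstar x'_def[symmetric] obj_multiplier_comb[where \<beta> = \<beta>1] by simp
  ultimately show ?thesis by linarith
qed

(* The lower bound above for the new dual value majorizes the
   proximal model at u = (1-tau) xb + tau x*(yp): phi + linearized penalty is convex, and
   the proximal terms at u cost at most (1 - tau) Q by the step-size condition. The proximal
   point xp does even better on the model, and f <= model. *)
lemma primal_step:
  fixes xb :: "(real^'n1) \<times> (real^'n2)" and yb :: "real^'m" and \<beta>1 \<beta>2 \<tau> :: real
  assumes \<beta>: "\<beta>1 > 0" "\<beta>2 > 0" and \<tau>: "0 < \<tau>" "\<tau> < 1"
    and xb: "xb \<in> X1 \<times> X2" and gap: "ff xb \<beta>2 \<le> dd yb \<beta>1"
    and c1: "2 * \<tau>\<^sup>2 * (opnorm A1)\<^sup>2 \<le> (1 - \<tau>) * \<beta>1 * \<beta>2 * \<sigma>1"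
    and c2: "2 * \<tau>\<^sup>2 * (opnorm A2)\<^sup>2 \<le> (1 - \<tau>) * \<beta>1 * \<beta>2 * \<sigma>2"
  defines "xh \<equiv> (1 - \<tau>) *\<^sub>R xb + \<tau> *\<^sub>R xs yb \<beta>1"
  shows "Pmap \<phi>1 \<phi>2 A1 A2 b X1 X2 xh \<beta>2 \<in> X1 \<times> X2 \<and>
    ff (Pmap \<phi>1 \<phi>2 A1 A2 b X1 X2 xh \<beta>2) \<beta>2 \<le> dd ((1 - \<tau>) *\<^sub>R yb + \<tau> *\<^sub>R ys xh \<beta>2) ((1 - \<tau>) * \<beta>1)"
proof -
  define yp where "yp = (1 - \<tau>) *\<^sub>R yb + \<tau> *\<^sub>R ys xh \<beta>2"
  define x' where "x' = xs yp ((1 - \<tau>) * \<beta>1)"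
  define u where "u = (1 - \<tau>) *\<^sub>R xb + \<tau> *\<^sub>R x'"
  define xp where "xp = Pmap \<phi>1 \<phi>2 A1 A2 b X1 X2 xh \<beta>2"
  define d1 where "d1 = norm (fst (xs yb \<beta>1) - fst x')"
  define d2 where "d2 = norm (snd (xs yb \<beta>1) - snd x')"
  define Q where "Q = \<beta>1 / 2 * (\<sigma>1 * d1\<^sup>2 + \<sigma>2 * d2\<^sup>2)"
  define minorant where "minorant x = phi x + lin_penalty xh \<beta>2 x" for x
  have x': "x' \<in> X1 \<times> X2" using xstar_minimizes x'_def by blast
  have u: "u \<in> X1 \<times> X2" unfolding u_def using xb x' \<tau> by (intro convex_comb_in_X) auto
  have lower: "(1 - \<tau>) * (minorant xb + Q) + \<tau> * minorant x' \<le> dd yp ((1 - \<tau>) * \<beta>1)"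
    using dfun_lower_after_primal_step[OF \<beta> \<tau>[THEN less_imp_le] gap, of xh]
    unfolding minorant_def Q_def d1_def d2_def x'_def yp_def .
  have "minorant u \<le> (1 - \<tau>) * minorant xb + \<tau> * minorant x'"
    using phi_convex[of \<tau> xb x'] \<tau> unfolding minorant_def u_def lin_penalty_affine
    by (simp add: algebra_simps)
  moreover have "(opnorm A1)\<^sup>2 / \<beta>2 * (norm (fst u - fst xh))\<^sup>2 + (opnorm A2)\<^sup>2 / \<beta>2 * (norm (snd u - snd xh))\<^sup>2
      \<le> (1 - \<tau>) * Q"
  proof -
    have "fst u - fst xh = \<tau> *\<^sub>R (fst x' - fst (xs yb \<beta>1))"
      and "snd u - snd xh = \<tau> *\<^sub>R (snd x' - snd (xs yb \<beta>1))"
      unfolding u_def xh_def by (simp_all add: algebra_simps)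
    then have "norm (fst u - fst xh) = \<tau> * d1" "norm (snd u - snd xh) = \<tau> * d2"
      using \<tau> unfolding d1_def d2_def by (simp_all add: norm_minus_commute)
    then show ?thesis
      unfolding Q_def using primal_proximal_term_bound[OF \<beta>(2) c1 c2] by simp
  qed
  ultimately have "prox_model xh \<beta>2 u \<le> dd yp ((1 - \<tau>) * \<beta>1)"
    using lower unfolding prox_model_def minorant_def by (simp add: algebra_simps)
  moreover have "xp \<in> X1 \<times> X2" "prox_model xh \<beta>2 xp \<le> prox_model xh \<beta>2 u"
    using Pmap_minimizes_prox_model u unfolding xp_def by blast+
  moreover have "ff xp \<beta>2 \<le> prox_model xh \<beta>2 xp" using ffun_le_prox_model[OF \<beta>(2)] .
  ultimately show ?thesis unfolding xp_def yp_def by linarith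
qed

lemma Ld_pos:
  assumes "\<beta> > 0" "A1 \<noteq> 0 \<or> A2 \<noteq> 0"
  shows "Ld A1 A2 \<sigma>1 \<sigma>2 \<beta> > 0"
proof -
  have "0 \<le> (opnorm A1)\<^sup>2 / \<sigma>1" "0 \<le> (opnorm A2)\<^sup>2 / \<sigma>2" using sigma_pos by simp_all
  moreover have "0 < (opnorm A1)\<^sup>2 / \<sigma>1 \<or> 0 < (opnorm A2)\<^sup>2 / \<sigma>2"
    using assms(2) sigma_pos by (auto intro!: divide_pos_pos zero_less_power opnorm_pos)
  ultimately show ?thesis unfolding Ld_def using assms(1) by (auto intro: add_pos_nonneg add_nonneg_pos)
qed

(* Cauchy-Schwarz with the operator norms: the residual at x, tested against the residual
   at z, loses at most |Az - b| |A_i| |x_i - z_i| per block relative to |Az - b|^2. *)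
lemma res_inner_lower:
  "(norm (res z))\<^sup>2 - norm (res z) * (opnorm A1 * norm (fst x - fst z))
     - norm (res z) * (opnorm A2 * norm (snd x - snd z)) \<le> res z \<bullet> res x"
proof -
  have block: "- (res z \<bullet> (A *v v)) \<le> norm (res z) * (opnorm A * norm v)" for A :: "real^'k^'m" and v
  proof -
    have "- (res z \<bullet> (A *v v)) \<le> norm (res z) * norm (A *v v)"
      using Cauchy_Schwarz_ineq2 by (rule abs_le_D2)
    also have "\<dots> \<le> norm (res z) * (opnorm A * norm v)" by (intro mult_left_mono opnorm_bound) simp
    finally show ?thesis .
  qed
  have "res x = res z + A1 *v (fst x - fst z) + A2 *v (snd x - snd z)"
    using res_diff[of x z] by (simp add: algebra_simps)
  then have "res z \<bullet> res x = (norm (res z))\<^sup>2 + res z \<bullet> (A1 *v (fst x - fst z)) + res z \<bullet> (A2 *v (snd x - snd z))"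
    by (simp only: inner_add_right power2_norm_eq_inner)
  then show ?thesis using block[of A1 "fst x - fst z"] block[of A2 "snd x - snd z"] by linarith
qed

lemma Gmap_ascent:
  assumes "\<beta> > 0" "A1 \<noteq> 0 \<or> A2 \<noteq> 0"
  shows "dd yh \<beta> + (norm (res (xs yh \<beta>)))\<^sup>2 / (2 * Ld A1 A2 \<sigma>1 \<sigma>2 \<beta>)
    \<le> dd (Gmap \<phi>1 \<phi>2 A1 A2 b X1 X2 p1 p2 \<sigma>1 \<sigma>2 yh \<beta>) \<beta>"
proof -
  define L where "L = Ld A1 A2 \<sigma>1 \<sigma>2 \<beta>"
  define S where "S = res (xs yh \<beta>)"
  define y' where "y' = Gmap \<phi>1 \<phi>2 A1 A2 b X1 X2 p1 p2 \<sigma>1 \<sigma>2 yh \<beta>"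
  define x' where "x' = xs y' \<beta>"
  define d1 where "d1 = norm (fst (xs yh \<beta>) - fst x')"
  define d2 where "d2 = norm (snd (xs yh \<beta>) - snd x')"
  have "x' \<in> X1 \<times> X2" using xstar_minimizes x'_def by blast
  have "y' = yh + (1 / L) *\<^sub>R S" unfolding y'_def Gmap_def Let_def L_def S_def by simp
  then have "dd y' \<beta> = obj yh \<beta> x' + (S \<bullet> res x') / L"
    unfolding dfun_eq_obj_xstar x'_def[symmetric] by (subst obj_shift[of _ _ _ yh]) simp
  moreover have "dd yh \<beta> + \<beta> / 2 * (\<sigma>1 * d1\<^sup>2 + \<sigma>2 * d2\<^sup>2) \<le> obj yh \<beta> x'"
    using obj_growth[OF \<open>x' \<in> X1 \<times> X2\<close>] assms(1) unfolding d1_def d2_def by simp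
  moreover have "((norm S)\<^sup>2 - norm S * opnorm A1 * d1 - norm S * opnorm A2 * d2) / L \<le> (S \<bullet> res x') / L"
    using res_inner_lower[of "xs yh \<beta>" x'] Ld_pos[OF assms] unfolding S_def L_def d1_def d2_def
    by (intro divide_right_mono) (simp_all add: norm_minus_commute mult.assoc)
  moreover have "(norm S)\<^sup>2 / (2 * L) \<le> \<beta> / 2 * (\<sigma>1 * d1\<^sup>2 + \<sigma>2 * d2\<^sup>2)
      + ((norm S)\<^sup>2 - norm S * opnorm A1 * d1 - norm S * opnorm A2 * d2) / L"
    using Ld_pos[OF assms] assms(1) sigma_pos unfolding L_def
    by (intro dual_ascent_arith) (simp_all add: Ld_def)
  ultimately show ?thesis unfolding y'_def S_def L_def by linarith
qed

(* Lower bound for d at a combination of multipliers, evaluated at the new minimizer z: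
   d((1-tau) yb + tau y') >= (1-tau) d(yb) + tau (phi z + y'.(Az - b)), using p_i >= 0. *)
lemma dfun_multiplier_comb:
  fixes yb y' :: "real^'m" and \<tau> \<beta> :: real
  assumes "0 \<le> \<tau>" "\<tau> \<le> 1" "\<beta> \<ge> 0"
  defines "z \<equiv> xs ((1 - \<tau>) *\<^sub>R yb + \<tau> *\<^sub>R y') \<beta>"
  shows "(1 - \<tau>) * dd yb \<beta> + \<tau> * (phi z + y' \<bullet> res z) \<le> dd ((1 - \<tau>) *\<^sub>R yb + \<tau> *\<^sub>R y') \<beta>"
proof -
  have z: "z \<in> X1 \<times> X2" using xstar_minimizes z_def by blast
  then have "(1 - \<tau>) * dd yb \<beta> \<le> (1 - \<tau>) * obj yb \<beta> z"
    using xstar_minimizes assms(2) unfolding dfun_eq_obj_xstar by (intro mult_left_mono) auto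
  moreover have "0 \<le> (\<beta> - (1 - \<tau>) * \<beta>) * (p1 (fst z) + p2 (snd z))"
  proof -
    have "\<beta> - (1 - \<tau>) * \<beta> = \<tau> * \<beta>" by (simp add: algebra_simps)
    then show ?thesis using z prox_nonneg assms(1,3) by (auto intro!: mult_nonneg_nonneg add_nonneg_nonneg)
  qed
  ultimately show ?thesis
    unfolding dfun_eq_obj_xstar[of "(1 - \<tau>) *\<^sub>R yb + \<tau> *\<^sub>R y'"] z_def[symmetric] obj_multiplier_comb[where \<beta> = \<beta>]
    by linarith
qed

(* f at a convex combination with the smaller weight (1-tau) beta: exact expansion of the
   penalty plus convexity of phi. *)
lemma ffun_convex_comb:
  assumes "0 \<le> \<tau>" "\<tau> < 1" "\<beta> > 0"
  shows "ff ((1 - \<tau>) *\<^sub>R x + \<tau> *\<^sub>R z) ((1 - \<tau>) * \<beta>)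
    \<le> (1 - \<tau>) * (phi x + (norm (res x))\<^sup>2 / (2 * \<beta>)) + \<tau> * (phi z + (res x \<bullet> res z) / \<beta>)
      + \<tau>\<^sup>2 * (norm (res z))\<^sup>2 / (2 * (1 - \<tau>) * \<beta>)"
proof -
  have "phi ((1 - \<tau>) *\<^sub>R x + \<tau> *\<^sub>R z) \<le> (1 - \<tau>) * phi x + \<tau> * phi z"
    using assms by (intro phi_convex) auto
  moreover have "1 / (2 * ((1 - \<tau>) * \<beta>)) * (norm ((1 - \<tau>) *\<^sub>R res x + \<tau> *\<^sub>R res z))\<^sup>2
      = (1 - \<tau>) * ((norm (res x))\<^sup>2 / (2 * \<beta>)) + \<tau> * ((res x \<bullet> res z) / \<beta>)
        + \<tau>\<^sup>2 * (norm (res z))\<^sup>2 / (2 * (1 - \<tau>) * \<beta>)"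
    using assms by (intro penalty_convex_comb) auto
  ultimately show ?thesis unfolding ffun_def res_convex_comb distrib_left by linarith
qed

(* Part (b), the dual step. f at the new primal point is bounded by a convex combination
   of the gap inequality at (xb, yb) and the terms of d at yh, up to a quadratic error in
   |Az - b|; the step-size condition makes this error at most the ascent gain of G. *)
lemma dual_step:
  fixes xb :: "(real^'n1) \<times> (real^'n2)" and yb :: "real^'m" and \<beta>1 \<beta>2 \<tau> :: real
  assumes \<beta>: "\<beta>1 > 0" "\<beta>2 > 0" and \<tau>: "0 < \<tau>" "\<tau> < 1"
    and xb: "xb \<in> X1 \<times> X2" and gap: "ff xb \<beta>2 \<le> dd yb \<beta>1" and A_nz: "A1 \<noteq> 0 \<or> A2 \<noteq> 0"
    and cond: "\<tau>\<^sup>2 * ((opnorm A1)\<^sup>2 / \<sigma>1 + (opnorm A2)\<^sup>2 / \<sigma>2) \<le> (1 - \<tau>) * \<beta>1 * \<beta>2"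
  defines "yh \<equiv> (1 - \<tau>) *\<^sub>R yb + \<tau> *\<^sub>R ys xb \<beta>2"
  shows "(1 - \<tau>) *\<^sub>R xb + \<tau> *\<^sub>R xs yh \<beta>1 \<in> X1 \<times> X2 \<and>
    ff ((1 - \<tau>) *\<^sub>R xb + \<tau> *\<^sub>R xs yh \<beta>1) ((1 - \<tau>) * \<beta>2)
      \<le> dd (Gmap \<phi>1 \<phi>2 A1 A2 b X1 X2 p1 p2 \<sigma>1 \<sigma>2 yh \<beta>1) \<beta>1"
proof
  define z where "z = xs yh \<beta>1"
  define L where "L = Ld A1 A2 \<sigma>1 \<sigma>2 \<beta>1"
  have "L > 0" unfolding L_def using Ld_pos[OF \<beta>(1) A_nz] .
  show "(1 - \<tau>) *\<^sub>R xb + \<tau> *\<^sub>R xs yh \<beta>1 \<in> X1 \<times> X2"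
    using xstar_minimizes xb \<tau> by (intro convex_comb_in_X) auto
  have error: "\<tau>\<^sup>2 * (norm (res z))\<^sup>2 / (2 * (1 - \<tau>) * \<beta>2) \<le> (norm (res z))\<^sup>2 / (2 * L)"
  proof -
    have "\<tau>\<^sup>2 * L \<le> (1 - \<tau>) * \<beta>2" using cond \<beta>(1) unfolding L_def Ld_def by (simp add: field_simps)
    then have "\<tau>\<^sup>2 / (2 * (1 - \<tau>) * \<beta>2) \<le> 1 / (2 * L)" using \<tau> \<beta>(2) \<open>L > 0\<close> by (simp add: field_simps)
    from mult_right_mono[OF this, of "(norm (res z))\<^sup>2"] show ?thesis by simp
  qed
  have "ff ((1 - \<tau>) *\<^sub>R xb + \<tau> *\<^sub>R z) ((1 - \<tau>) * \<beta>2)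
      \<le> (1 - \<tau>) * (phi xb + (norm (res xb))\<^sup>2 / (2 * \<beta>2)) + \<tau> * (phi z + ys xb \<beta>2 \<bullet> res z)
        + \<tau>\<^sup>2 * (norm (res z))\<^sup>2 / (2 * (1 - \<tau>) * \<beta>2)"
    using ffun_convex_comb[OF _ \<tau>(2) \<beta>(2), of xb z] \<tau>(1) unfolding ystar_inner by simp
  moreover have "(1 - \<tau>) * (phi xb + (norm (res xb))\<^sup>2 / (2 * \<beta>2)) \<le> (1 - \<tau>) * dd yb \<beta>1"
    using gap \<tau> unfolding ffun_def by (intro mult_left_mono) auto
  ultimately have "ff ((1 - \<tau>) *\<^sub>R xb + \<tau> *\<^sub>R z) ((1 - \<tau>) * \<beta>2)
      \<le> (1 - \<tau>) * dd yb \<beta>1 + \<tau> * (phi z + ys xb \<beta>2 \<bullet> res z) + (norm (res z))\<^sup>2 / (2 * L)"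
    using error by linarith
  also have "\<dots> \<le> dd yh \<beta>1 + (norm (res z))\<^sup>2 / (2 * L)"
    using dfun_multiplier_comb[of \<tau> \<beta>1 yb "ys xb \<beta>2"] \<tau> \<beta>(1) unfolding yh_def z_def by simp
  also have "\<dots> \<le> dd (Gmap \<phi>1 \<phi>2 A1 A2 b X1 X2 p1 p2 \<sigma>1 \<sigma>2 yh \<beta>1) \<beta>1"
    using Gmap_ascent[OF \<beta>(1) A_nz] unfolding z_def L_def .
  finally show "ff ((1 - \<tau>) *\<^sub>R xb + \<tau> *\<^sub>R xs yh \<beta>1) ((1 - \<tau>) * \<beta>2)
      \<le> dd (Gmap \<phi>1 \<phi>2 A1 A2 b X1 X2 p1 p2 \<sigma>1 \<sigma>2 yh \<beta>1) \<beta>1" unfolding z_def .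
qed

end

theorem lemma6:
  fixes X1 :: "(real^'n1) set" and X2 :: "(real^'n2) set"
    and \<phi>1 :: "real^'n1 \<Rightarrow> real" and \<phi>2 :: "real^'n2 \<Rightarrow> real"
    and A1 :: "real^'n1^'m" and A2 :: "real^'n2^'m" and b :: "real^'m"
    and p1 :: "real^'n1 \<Rightarrow> real" and p2 :: "real^'n2 \<Rightarrow> real"
    and \<sigma>1 \<sigma>2 \<beta>1 \<beta>2 \<tau> :: real
    and xb :: "(real^'n1) \<times> (real^'n2)" and yb :: "real^'m"
  assumes X1: "X1 \<noteq> {}" "closed X1" "convex X1" "bounded X1"
    and X2: "X2 \<noteq> {}" "closed X2" "convex X2" "bounded X2"
    and phi: "convex_on UNIV \<phi>1" "convex_on UNIV \<phi>2"
    and prox: "prox_function X1 \<sigma>1 p1" "prox_function X2 \<sigma>2 p2"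
    and A_nz: "A1 \<noteq> 0 \<or> A2 \<noteq> 0"
    and beta: "\<beta>1 > 0" "\<beta>2 > 0"
    and tau: "0 < \<tau>" "\<tau> < 1"
    and xb: "xb \<in> X1 \<times> X2"
    and gap: "ffun \<phi>1 \<phi>2 A1 A2 b xb \<beta>2 \<le> dfun \<phi>1 \<phi>2 A1 A2 b X1 X2 p1 p2 yb \<beta>1"
    and cond: "\<beta>1 * \<beta>2 \<ge> 2 * \<tau>\<^sup>2 / (1 - \<tau>) * max ((opnorm A1)\<^sup>2 / \<sigma>1) ((opnorm A2)\<^sup>2 / \<sigma>2)"
  shows
    "(let xh = (1 - \<tau>) *\<^sub>R xb + \<tau> *\<^sub>R xstar \<phi>1 \<phi>2 A1 A2 b X1 X2 p1 p2 yb \<beta>1;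
          yp = (1 - \<tau>) *\<^sub>R yb + \<tau> *\<^sub>R ystar A1 A2 b xh \<beta>2;
          xp = Pmap \<phi>1 \<phi>2 A1 A2 b X1 X2 xh \<beta>2;
          \<beta>1p = (1 - \<tau>) * \<beta>1
      in xp \<in> X1 \<times> X2 \<and>
         ffun \<phi>1 \<phi>2 A1 A2 b xp \<beta>2 \<le> dfun \<phi>1 \<phi>2 A1 A2 b X1 X2 p1 p2 yp \<beta>1p)
   \<and>
    (let yh = (1 - \<tau>) *\<^sub>R yb + \<tau> *\<^sub>R ystar A1 A2 b xb \<beta>2;
          xp = (1 - \<tau>) *\<^sub>R xb + \<tau> *\<^sub>R xstar \<phi>1 \<phi>2 A1 A2 b X1 X2 p1 p2 yh \<beta>1;
          yp = Gmap \<phi>1 \<phi>2 A1 A2 b X1 X2 p1 p2 \<sigma>1 \<sigma>2 yh \<beta>1;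
          \<beta>2p = (1 - \<tau>) * \<beta>2
      in xp \<in> X1 \<times> X2 \<and>
         ffun \<phi>1 \<phi>2 A1 A2 b xp \<beta>2p \<le> dfun \<phi>1 \<phi>2 A1 A2 b X1 X2 p1 p2 yp \<beta>1)"
proof -
  interpret composite_problem X1 X2 \<phi>1 \<phi>2 A1 A2 b p1 p2 \<sigma>1 \<sigma>2
    using X1 X2 phi prox by unfold_locales
  note step_size = step_size_condition[OF sigma_pos tau(2) cond]
  show ?thesis
    unfolding Let_def
    using primal_step[OF beta tau xb gap step_size(1,2)] dual_step[OF beta tau xb gap A_nz step_size(3)]
    by (rule conjI)
qed

end
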